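(* Let $R$ be a commutative ring, $S$ a subring of $R$, $I$ an ideal of $S$, $n\ge1$, and $f\in R[x]$. The following are equivalent: (1) $f\in \mathrm{Int}_R(T_n(S),T_n(I))$; (2) for all $1\le i\le j\le n$, $\langle f,p_{ij}\rangle\in \mathrm{Int}(S^{\ast},I)$; (3) for every $0\le k\le n-1$ there exists $i\in\mathbb{N}$ with $\langle f,p_{i,\,i+k}\rangle\in\mathrm{Int}(S^{\ast},I)$.
   Context: $\mathbb{N}=\{1,2,3,\dots\}$. For a ring $A$, $T_n(A)$ denotes the ring of upper triangular $n\times n$ matrices with entries in $A$. For $g\in R[x]$ and a square matrix $C$ over $R$, $g(C)$ is the usual evaluation. $\mathrm{Int}_R(T_m(S),T_m(I))=\{g\in R[x]\mid \forall C\in T_m(S):\ g(C)\in T_m(I)\}$. Let $R[X]=R[\{x_{ab}\mid a,b\in\mathbb{N}\}]$ be the polynomial ring in independent commuting variables $x_{ab}$. Path polynomials: for $1\le i\le j$ and $k>0$, $p_{ij}^{(k)}=\sum_{i=i_1\le i_2\le\dots\le i_{k+1}=j} x_{i_1i_2}x_{i_2i_3}\cdots x_{i_ki_{k+1}}$; for $1\le i\le j$, $p_{ij}^{(0)}=\delta_{ij}$; for $i>j$, $p_{ij}^{(k)}=0$ for all $k$. Write $p_{ij}=(p_{ij}^{(k)})_{k\ge0}$. For $f=\sum_k f_kx^k\in R[x]$ set $\langle f,p_{ij}\rangle=\sum_{k\ge0} f_k\,p_{ij}^{(k)}\in R[X]$. $\mathrm{Int}(S^{\ast},I)$ denotes the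 set of polynomials in $R[X]$ that take values in $I$ whenever elements of $S$ are substituted (independently) for all the variables. *)

theory Defs
  imports "HOL-Computational_Algebra.Polynomial" "HOL-Library.FuncSet"
begin

definition is_subring :: "'a::comm_ring_1 set \<Rightarrow> bool" where
  "is_subring S \<longleftrightarrow> 0 \<in> S \<and> 1 \<in> S \<and> (\<forall>x\<in>S. \<forall>y\<in>S. x + y \<in> S \<and> x * y \<in> S \<and> - x \<in> S)"

definition is_ideal_of :: "'a::comm_ring_1 set \<Rightarrow> 'a set \<Rightarrow> bool" where
  "is_ideal_of I S \<longleftrightarrow> I \<subseteq> S \<and> 0 \<in> I \<and>
     (\<forall>x\<in>I. \<forall>y\<in>I. x + y \<in> I \<and> - x \<in> I) \<and> (\<forall>s\<in>S. \<forall>x\<in>I. s * x \<in> I)"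

text \<open>n x n matrices are functions nat => nat => 'a, indices 1..n, entries outside zero.\<close>
definition tri_mats :: "nat \<Rightarrow> 'a::comm_ring_1 set \<Rightarrow> (nat \<Rightarrow> nat \<Rightarrow> 'a) set" where
  "tri_mats n A = {M. \<forall>i j. (1 \<le> i \<and> i \<le> j \<and> j \<le> n \<longrightarrow> M i j \<in> A) \<and>
                           (\<not> (1 \<le> i \<and> i \<le> j \<and> j \<le> n) \<longrightarrow> M i j = 0)}"

definition mat_one :: "nat \<Rightarrow> nat \<Rightarrow> nat \<Rightarrow> 'a::comm_ring_1" where
  "mat_one n i j = (if i = j \<and> 1 \<le> i \<and> i \<le> n then 1 else 0)"

definition mat_mult :: "nat \<Rightarrow> (nat \<Rightarrow> nat \<Rightarrow> 'a::comm_ring_1) \<Rightarrow> (nat \<Rightarrow> nat \<Rightarrow> 'a) \<Rightarrow> nat \<Rightarrow> nat \<Rightarrow> 'a" where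
  "mat_mult n A B i j = (\<Sum>l\<in>{1..n}. A i l * B l j)"

fun mat_pow :: "nat \<Rightarrow> (nat \<Rightarrow> nat \<Rightarrow> 'a::comm_ring_1) \<Rightarrow> nat \<Rightarrow> nat \<Rightarrow> nat \<Rightarrow> 'a" where
  "mat_pow n C 0 = mat_one n"
| "mat_pow n C (Suc k) = mat_mult n (mat_pow n C k) C"

definition poly_mat_eval :: "nat \<Rightarrow> 'a::comm_ring_1 poly \<Rightarrow> (nat \<Rightarrow> nat \<Rightarrow> 'a) \<Rightarrow> nat \<Rightarrow> nat \<Rightarrow> 'a" where
  "poly_mat_eval n g C i j = (\<Sum>k\<le>degree g. coeff g k * mat_pow n C k i j)"

definition Int_T :: "nat \<Rightarrow> 'a::comm_ring_1 set \<Rightarrow> 'a set \<Rightarrow> 'a poly set" where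
  "Int_T n S I = {g. \<forall>C \<in> tri_mats n S. poly_mat_eval n g C \<in> tri_mats n I}"

text \<open>Value of the path polynomial p_ij^(k) under the substitution x_ab := c a b.\<close>
definition path_poly_eval :: "(nat \<Rightarrow> nat \<Rightarrow> 'a::comm_ring_1) \<Rightarrow> nat \<Rightarrow> nat \<Rightarrow> nat \<Rightarrow> 'a" where
  "path_poly_eval c i j k =
     (if 1 \<le> i \<and> i \<le> j then
        (if k = 0 then (if i = j then 1 else 0)
         else (\<Sum>s\<in>{s. s \<in> {1..k+1} \<rightarrow>\<^sub>E {i..j} \<and> s 1 = i \<and> s (k+1) = j \<and>
                        (\<forall>t\<in>{1..k}. s t \<le> s (Suc t))}.
                 \<Prod>t\<in>{1..k}. c (s t) (s (Suc t))))
      else 0)"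

text \<open>Value of <f, p_ij> under the substitution x_ab := c a b.\<close>
definition pair_eval :: "'a::comm_ring_1 poly \<Rightarrow> (nat \<Rightarrow> nat \<Rightarrow> 'a) \<Rightarrow> nat \<Rightarrow> nat \<Rightarrow> 'a" where
  "pair_eval f c i j = (\<Sum>k\<le>degree f. coeff f k * path_poly_eval c i j k)"

text \<open><f, p_ij> \<in> Int(S*, I): all substitutions of elements of S for the variables give values in I.\<close>
definition pair_in_Int :: "'a::comm_ring_1 poly \<Rightarrow> 'a set \<Rightarrow> 'a set \<Rightarrow> nat \<Rightarrow> nat \<Rightarrow> bool" where
  "pair_in_Int f S I i j \<longleftrightarrow> (\<forall>c. (\<forall>a b. c a b \<in> S) \<longrightarrow> pair_eval f c i j \<in> I)"

end

theory Submission
  imports Defs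
begin

text \<open>
  Evaluating at an upper triangular matrix C, the (i,j) entry of C^k is the sum over all
  weakly increasing index sequences i = s 1 \<le> ... \<le> s (k+1) = j of the products of the
  entries C (s t) (s (t+1)); that is, the path polynomial p_ij^(k) evaluated at the entries
  of C. Hence the (i,j) entry of f(C) is the value of <f, p_ij> at the entries of C, and
  conversely every substitution of elements of S for the variables of <f, p_ij> is realised
  by a matrix in T_n(S). This gives (1) \<longleftrightarrow> (2). For (2) \<longleftrightarrow> (3), shifting all
  indices by d turns <f, p_ij> into <f, p_(i+d)(j+d)> up to a renaming of variables, so
  membership in Int(S*, I) depends only on the difference j - i.
\<close>

definition monotone_paths :: "nat \<Rightarrow> nat \<Rightarrow> nat \<Rightarrow> (nat \<Rightarrow> nat) set" where
  "monotone_paths k i j = {s. s \<in> {1..k+1} \<rightarrow>\<^sub>E {i..j} \<and> s 1 = i \<and> s (k+1) = j \<and>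
                              (\<forall>t\<in>{1..k}. s t \<le> s (Suc t))}"

definition path_sum :: "(nat \<Rightarrow> nat \<Rightarrow> 'a::comm_ring_1) \<Rightarrow> nat \<Rightarrow> nat \<Rightarrow> nat \<Rightarrow> 'a" where
  "path_sum c k i j = (\<Sum>s\<in>monotone_paths k i j. \<Prod>t\<in>{1..k}. c (s t) (s (Suc t)))"

lemma finite_monotone_paths: "finite (monotone_paths k i j)"
proof (rule finite_subset)
  show "monotone_paths k i j \<subseteq> {1..k+1} \<rightarrow>\<^sub>E {i..j}"
    unfolding monotone_paths_def by auto
qed (simp add: finite_PiE)

lemma monotone_pathsD:
  assumes "s \<in> monotone_paths k i j"
  shows "s \<in> {1..k+1} \<rightarrow>\<^sub>E {i..j}" "s 1 = i" "s (k+1) = j" "\<And>t. t \<in> {1..k} \<Longrightarrow> s t \<le> s (Suc t)"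
  using assms unfolding monotone_paths_def by auto

lemma monotone_path_mono:
  assumes "\<forall>t\<in>{1..k}. s t \<le> s (Suc t)" "1 \<le> a" "a \<le> b" "b \<le> k+1"
  shows "(s a :: nat) \<le> s b"
  using assms(3,4)
proof (induction b rule: dec_induct)
  case (step m)
  then have "s m \<le> s (Suc m)" using assms(1,2) by auto
  with step show ?case by simp
qed simp

lemma path_sum_0: "path_sum c 0 i j = (if i = j then 1 else 0)"
proof -
  have "monotone_paths 0 i j = (if i = j then {restrict (\<lambda>_. i) {1}} else {})"
    unfolding monotone_paths_def by (auto simp: fun_eq_iff PiE_def extensional_def)
  then show ?thesis unfolding path_sum_def by simp
qed

lemma path_poly_eval_eq_path_sum:
  "1 \<le> i \<Longrightarrow> i \<le> j \<Longrightarrow> path_poly_eval c i j k = path_sum c k i j"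
  unfolding path_poly_eval_def by (simp add: path_sum_0) (simp add: path_sum_def monotone_paths_def)

text \<open>A path of length k+1 is a path of length k to its penultimate vertex l, plus one step.\<close>
lemma bij_betw_monotone_paths_Suc:
  "bij_betw (\<lambda>s. (s (k+1), restrict s {1..k+1}))
     (monotone_paths (Suc k) i j) (SIGMA l:{i..j}. monotone_paths k i l)"
proof (rule bij_betw_byWitness[where f' = "\<lambda>(l, s). s(k+2 := j)"])
  show "\<forall>s\<in>monotone_paths (Suc k) i j. (\<lambda>(l, s). s(k+2 := j)) (s (k+1), restrict s {1..k+1}) = s"
    by (auto simp: monotone_paths_def fun_eq_iff PiE_def extensional_def)
  show "\<forall>p\<in>SIGMA l:{i..j}. monotone_paths k i l.
          (\<lambda>s. (s (k+1), restrict s {1..k+1})) ((\<lambda>(l, s). s(k+2 := j)) p) = p"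
    by (auto simp: monotone_paths_def fun_eq_iff PiE_def extensional_def)
  show "(\<lambda>(l, s). s(k+2 := j)) ` (SIGMA l:{i..j}. monotone_paths k i l) \<subseteq> monotone_paths (Suc k) i j"
    by (auto simp: monotone_paths_def PiE_def Pi_def extensional_def le_Suc_eq)
  show "(\<lambda>s. (s (k+1), restrict s {1..k+1})) ` monotone_paths (Suc k) i j
          \<subseteq> (SIGMA l:{i..j}. monotone_paths k i l)"
  proof clarify
    fix s assume s: "s \<in> monotone_paths (Suc k) i j"
    note sP = monotone_pathsD[OF s]
    have mono: "\<forall>t\<in>{1..Suc k}. s t \<le> s (Suc t)" using sP(4) by blast
    have "i \<le> s t" "s t \<le> s (k+1)" if "t \<in> {1..k+1}" for t
      using sP(1) monotone_path_mono[OF mono, of t "k+1"] that by (auto simp: PiE_def Pi_def)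
    moreover have "s (k+1) \<le> j" using sP(1) by (auto simp: PiE_def Pi_def)
    ultimately show "s (k+1) \<in> {i..j} \<and> restrict s {1..k+1} \<in> monotone_paths k i (s (k+1))"
      using sP(2,4) unfolding monotone_paths_def by auto
  qed
qed

lemma path_sum_Suc:
  assumes "i \<le> j"
  shows "path_sum c (Suc k) i j = (\<Sum>l\<in>{i..j}. path_sum c k i l * c l j)"
proof -
  let ?term = "\<lambda>l s. (\<Prod>t\<in>{1..k}. c (s t) (s (Suc t))) * c l j"
  have "(\<Sum>l\<in>{i..j}. path_sum c k i l * c l j) = (\<Sum>l\<in>{i..j}. \<Sum>s\<in>monotone_paths k i l. ?term l s)"
    unfolding path_sum_def by (simp add: sum_distrib_right)
  also have "\<dots> = (\<Sum>(l, s)\<in>(SIGMA l:{i..j}. monotone_paths k i l). ?term l s)"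
    by (rule sum.Sigma) (auto simp: finite_monotone_paths)
  also have "\<dots> = (\<Sum>s\<in>monotone_paths (Suc k) i j. ?term (s (k+1)) (restrict s {1..k+1}))"
    by (rule sum.reindex_bij_betw[OF bij_betw_monotone_paths_Suc, symmetric,
          where g = "\<lambda>(l, s). ?term l s", unfolded case_prod_conv])
  also have "\<dots> = path_sum c (Suc k) i j"
    unfolding path_sum_def
    by (intro sum.cong refl) (auto simp: prod.nat_ivl_Suc' dest: monotone_pathsD(3))
  finally show ?thesis ..
qed

lemma path_sum_cong:
  assumes "\<And>a b. i \<le> a \<Longrightarrow> a \<le> b \<Longrightarrow> b \<le> j \<Longrightarrow> c a b = c' a b"
  shows "path_sum c k i j = path_sum c' k i j"
  unfolding path_sum_def
proof (intro sum.cong refl prod.cong)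
  fix s t assume s: "s \<in> monotone_paths k i j" and t: "t \<in> {1..k}"
  have "i \<le> s t" "s (Suc t) \<le> j"
    using t monotone_pathsD(1)[OF s] by (auto simp: PiE_def Pi_def)
  with monotone_pathsD(4)[OF s t] show "c (s t) (s (Suc t)) = c' (s t) (s (Suc t))"
    using assms by blast
qed

lemma path_sum_shift: "path_sum c k (i+d) (j+d) = path_sum (\<lambda>a b. c (a+d) (b+d)) k i j"
  unfolding path_sum_def
proof (rule sum.reindex_bij_witness[where j = "\<lambda>s. restrict (\<lambda>t. s t - d) {1..k+1}"
      and i = "\<lambda>s. restrict (\<lambda>t. s t + d) {1..k+1}"])
  fix s assume s: "s \<in> monotone_paths k (i+d) (j+d)"
  note sP = monotone_pathsD[OF s]
  show "restrict (\<lambda>t. restrict (\<lambda>t. s t - d) {1..k+1} t + d) {1..k+1} = s"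
    using sP(1) by (auto simp: fun_eq_iff PiE_def Pi_def extensional_def)
  show "restrict (\<lambda>t. s t - d) {1..k+1} \<in> monotone_paths k i j"
    using s unfolding monotone_paths_def by (auto simp: PiE_def Pi_def extensional_def)
  have "d \<le> s t" if "t \<in> {1..k+1}" for t
    using sP(1) that by (auto simp: PiE_def Pi_def)
  then show "(\<Prod>t\<in>{1..k}. c (restrict (\<lambda>t. s t - d) {1..k+1} t + d)
                           (restrict (\<lambda>t. s t - d) {1..k+1} (Suc t) + d))
             = (\<Prod>t\<in>{1..k}. c (s t) (s (Suc t)))"
    by (intro prod.cong) auto
next
  fix s assume s: "s \<in> monotone_paths k i j"
  show "restrict (\<lambda>t. restrict (\<lambda>t. s t + d) {1..k+1} t - d) {1..k+1} = s"
    using monotone_pathsD(1)[OF s] by (auto simp: fun_eq_iff PiE_def Pi_def extensional_def)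
  show "restrict (\<lambda>t. s t + d) {1..k+1} \<in> monotone_paths k (i+d) (j+d)"
    using s unfolding monotone_paths_def by (auto simp: PiE_def Pi_def extensional_def)
qed

lemma mat_pow_outside_triangle:
  assumes C: "C \<in> tri_mats n X" and outside: "\<not> (1 \<le> a \<and> a \<le> b \<and> b \<le> n)"
  shows "mat_pow n C k a b = 0"
  using outside
proof (induction k arbitrary: b)
  case 0 then show ?case by (auto simp: mat_one_def)
next
  case (Suc k)
  have "mat_pow n C k a l * C l b = 0" for l
  proof (cases "1 \<le> a \<and> a \<le> l \<and> l \<le> n")
    case True
    then have "C l b = 0" using Suc.prems C unfolding tri_mats_def by auto
    then show ?thesis by simp
  qed (simp add: Suc.IH)
  then show ?case by (simp add: mat_mult_def)
qed

lemma mat_pow_eq_path_sum: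
  assumes C: "C \<in> tri_mats n X" and "1 \<le> i" "i \<le> j" "j \<le> n"
  shows "mat_pow n C k i j = path_sum C k i j"
  using assms(3,4)
proof (induction k arbitrary: j)
  case 0 then show ?case using assms(2) by (simp add: mat_one_def path_sum_0)
next
  case (Suc k)
  have vanish: "mat_pow n C k i l * C l j = 0" if "l \<in> {1..n} - {i..j}" for l
  proof (cases "l < i")
    case True then show ?thesis using mat_pow_outside_triangle[OF C, of i l k] by simp
  next
    case False then have "C l j = 0" using that C unfolding tri_mats_def by auto
    then show ?thesis by simp
  qed
  have "mat_pow n C (Suc k) i j = (\<Sum>l\<in>{1..n}. mat_pow n C k i l * C l j)"
    by (simp add: mat_mult_def)
  also have "\<dots> = (\<Sum>l\<in>{i..j}. mat_pow n C k i l * C l j)"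
    using assms(2) Suc.prems vanish by (intro sum.mono_neutral_right) auto
  also have "\<dots> = (\<Sum>l\<in>{i..j}. path_sum C k i l * C l j)"
    using Suc.IH Suc.prems by (intro sum.cong) auto
  also have "\<dots> = path_sum C (Suc k) i j" by (simp only: path_sum_Suc[OF Suc.prems(1)])
  finally show ?case .
qed

lemma poly_mat_eval_eq_pair_eval:
  assumes "C \<in> tri_mats n X" and "1 \<le> i" "i \<le> j" "j \<le> n"
  shows "poly_mat_eval n f C i j = pair_eval f C i j"
  unfolding poly_mat_eval_def pair_eval_def
  by (simp add: mat_pow_eq_path_sum[OF assms] path_poly_eval_eq_path_sum[OF assms(2,3)])

lemma poly_mat_eval_outside_triangle:
  assumes "C \<in> tri_mats n X" and "\<not> (1 \<le> i \<and> i \<le> j \<and> j \<le> n)"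
  shows "poly_mat_eval n f C i j = 0"
  unfolding poly_mat_eval_def using mat_pow_outside_triangle[OF assms] by simp

lemma pair_eval_cong:
  assumes "\<And>a b. i \<le> a \<Longrightarrow> a \<le> b \<Longrightarrow> b \<le> j \<Longrightarrow> c a b = c' a b" "1 \<le> i" "i \<le> j"
  shows "pair_eval f c i j = pair_eval f c' i j"
  unfolding pair_eval_def path_poly_eval_eq_path_sum[OF assms(2,3)]
  using path_sum_cong[OF assms(1)] by simp

lemma pair_eval_shift:
  assumes "1 \<le> i" "i \<le> j"
  shows "pair_eval f c (i+d) (j+d) = pair_eval f (\<lambda>a b. c (a+d) (b+d)) i j"
proof -
  have "1 \<le> i + d" "i + d \<le> j + d" using assms by auto
  then show ?thesis
    unfolding pair_eval_def
    by (simp add: path_poly_eval_eq_path_sum path_poly_eval_eq_path_sum[OF assms] path_sum_shift)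
qed

lemma pair_in_Int_shift_iff:
  assumes "1 \<le> i" "i \<le> j"
  shows "pair_in_Int f S I (i+d) (j+d) \<longleftrightarrow> pair_in_Int f S I i j"
  unfolding pair_in_Int_def pair_eval_shift[OF assms]
proof (intro iffI allI impI)
  fix c :: "nat \<Rightarrow> nat \<Rightarrow> _"
  assume shifted: "\<forall>c. (\<forall>a b. c a b \<in> S) \<longrightarrow> pair_eval f (\<lambda>a b. c (a+d) (b+d)) i j \<in> I"
    and "\<forall>a b. c a b \<in> S"
  then show "pair_eval f c i j \<in> I"
    using shifted[rule_format, of "\<lambda>a b. c (a-d) (b-d)"] by simp
qed simp

lemma pair_in_Int_diagonal_iff:
  assumes "1 \<le> i" "1 \<le> i'"
  shows "pair_in_Int f S I i (i+k) \<longleftrightarrow> pair_in_Int f S I i' (i'+k)"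
  using pair_in_Int_shift_iff[of 1 "1+k" f S I "i-1"]
        pair_in_Int_shift_iff[of 1 "1+k" f S I "i'-1"] assms by (simp add: add.commute)

lemma Int_T_iff_pair_in_Int:
  assumes "0 \<in> S"
  shows "f \<in> Int_T n S I \<longleftrightarrow> (\<forall>i j. 1 \<le> i \<and> i \<le> j \<and> j \<le> n \<longrightarrow> pair_in_Int f S I i j)"
proof (intro iffI allI impI)
  fix i j assume f: "f \<in> Int_T n S I" and ij: "1 \<le> i \<and> i \<le> j \<and> j \<le> n"
  show "pair_in_Int f S I i j" unfolding pair_in_Int_def
  proof (intro allI impI)
    fix c :: "nat \<Rightarrow> nat \<Rightarrow> _" assume "\<forall>a b. c a b \<in> S"
    define C where "C = (\<lambda>a b. if 1 \<le> a \<and> a \<le> b \<and> b \<le> n then c a b else 0)"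
    have C: "C \<in> tri_mats n S" unfolding tri_mats_def C_def using \<open>\<forall>a b. c a b \<in> S\<close> by auto
    then have "poly_mat_eval n f C i j \<in> I" using f ij unfolding Int_T_def tri_mats_def by blast
    moreover have "pair_eval f C i j = pair_eval f c i j"
      using ij by (intro pair_eval_cong) (auto simp: C_def)
    ultimately show "pair_eval f c i j \<in> I"
      using poly_mat_eval_eq_pair_eval[OF C] ij by simp
  qed
next
  assume pairs: "\<forall>i j. 1 \<le> i \<and> i \<le> j \<and> j \<le> n \<longrightarrow> pair_in_Int f S I i j"
  show "f \<in> Int_T n S I" unfolding Int_T_def
  proof (intro CollectI ballI)
    fix C assume C: "C \<in> tri_mats n S"
    have "C a b \<in> S" for a b
      using C assms unfolding tri_mats_def by (cases "1 \<le> a \<and> a \<le> b \<and> b \<le> n") auto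
    then have "pair_eval f C i j \<in> I" if "1 \<le> i \<and> i \<le> j \<and> j \<le> n" for i j
      using pairs that unfolding pair_in_Int_def by blast
    then show "poly_mat_eval n f C \<in> tri_mats n I"
      unfolding tri_mats_def
      using poly_mat_eval_eq_pair_eval[OF C] poly_mat_eval_outside_triangle[OF C] by auto
  qed
qed

lemma all_pairs_in_Int_iff_diagonals:
  assumes "n \<ge> 1"
  shows "(\<forall>i j. 1 \<le> i \<and> i \<le> j \<and> j \<le> n \<longrightarrow> pair_in_Int f S I i j) \<longleftrightarrow>
         (\<forall>k \<le> n - 1. \<exists>i \<ge> 1. pair_in_Int f S I i (i + k))"
proof (intro iffI allI impI)
  fix k assume "\<forall>i j. 1 \<le> i \<and> i \<le> j \<and> j \<le> n \<longrightarrow> pair_in_Int f S I i j" "k \<le> n - 1"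
  then have "pair_in_Int f S I 1 (1 + k)" using assms by auto
  then show "\<exists>i \<ge> 1. pair_in_Int f S I i (i + k)" by blast
next
  fix i j assume diagonals: "\<forall>k \<le> n - 1. \<exists>i \<ge> 1. pair_in_Int f S I i (i + k)"
    and ij: "1 \<le> i \<and> i \<le> j \<and> j \<le> n"
  moreover have "j - i \<le> n - 1" using ij by auto
  ultimately obtain i0 where "i0 \<ge> 1" "pair_in_Int f S I i0 (i0 + (j - i))" by blast
  then have "pair_in_Int f S I i (i + (j - i))" using pair_in_Int_diagonal_iff ij by blast
  then show "pair_in_Int f S I i j" using ij by simp
qed

theorem proposition2p10:
  fixes S I :: "'a::comm_ring_1 set" and n :: nat and f :: "'a poly"
  assumes "is_subring S" and "is_ideal_of I S" and "n \<ge> 1"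
  shows "(f \<in> Int_T n S I \<longleftrightarrow> (\<forall>i j. 1 \<le> i \<and> i \<le> j \<and> j \<le> n \<longrightarrow> pair_in_Int f S I i j))
       \<and> ((\<forall>i j. 1 \<le> i \<and> i \<le> j \<and> j \<le> n \<longrightarrow> pair_in_Int f S I i j) \<longleftrightarrow>
          (\<forall>k \<le> n - 1. \<exists>i \<ge> 1. pair_in_Int f S I i (i + k)))"
proof
  have "0 \<in> S" using assms(1) unfolding is_subring_def by blast
  then show "f \<in> Int_T n S I \<longleftrightarrow> (\<forall>i j. 1 \<le> i \<and> i \<le> j \<and> j \<le> n \<longrightarrow> pair_in_Int f S I i j)"
    by (rule Int_T_iff_pair_in_Int)
  show "(\<forall>i j. 1 \<le> i \<and> i \<le> j \<and> j \<le> n \<longrightarrow> pair_in_Int f S I i j) \<longleftrightarrow>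
        (\<forall>k \<le> n - 1. \<exists>i \<ge> 1. pair_in_Int f S I i (i + k))"
    using assms(3) by (rule all_pairs_in_Int_iff_diagonals)
qed

end
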